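(* Let $z\in\mathbb{C}$ with $|z|>1$ and let $t\ge 2$ be an integer. Then $$\lim_{n\to\infty}\frac{l_{2^{t-1}n+2^{t-2}}(z)}{l_{2^{t-1}n+2^{t-2}-1}(z)}=\frac{(z^2-1)F_{t-1}(z)}{F_{t-1}(z)-2}.$$ In particular $\lim_{n\to\infty} l_{2n+1}(z)/l_{2n}(z)=z^2+1$, $\lim_{n\to\infty} l_{4n+2}(z)/l_{4n+1}(z)=\frac{z^4+1}{z^2+1}$, and $\lim_{n\to\infty} l_{8n+4}(z)/l_{8n+3}(z)=\frac{z^8+1}{(z^4+1)(z^2+1)}$.
   Context: For $n\ge0$ and $z\in\mathbb{C}$, $p_n(z)=\frac12\sum_{i=0}^{n}\left(1-(-1)^{\binom{n}{i}}\right)z^i$, i.e. the sum of $z^i$ over those $i\in\{0,\dots,n\}$ with $\binom{n}{i}$ odd. The polynomial $p_{2n}(z)-1$ is divisible by $z^2$, and $l_n(z)=\frac{p_{2n}(z)-1}{z^2}$. $F_k(z)=z^{2^k}+1$. *)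

theory Defs
  imports Complex_Main
begin

definition p :: "nat \<Rightarrow> complex \<Rightarrow> complex" where
  "p n z = (\<Sum>i\<in>{i. i \<le> n \<and> odd (n choose i)}. z ^ i)"

text \<open>l_n(z) = (p_{2n}(z) - 1) / z^2 (a polynomial, since z^2 divides p_{2n} - 1).\<close>
definition l :: "nat \<Rightarrow> complex \<Rightarrow> complex" where
  "l n z = (p (2 * n) z - 1) / z ^ 2"

definition F :: "nat \<Rightarrow> complex \<Rightarrow> complex" where
  "F k z = z ^ (2 ^ k) + 1"

end

theory Submission
  imports Defs
begin

text \<open>
  Lucas' theorem modulo 2 gives \<open>p (2*k) z = p k (z\<^sup>2)\<close> and
  \<open>p (2*k+1) z = (1 + z) * p k (z\<^sup>2)\<close>, hence \<open>p (2^s*a + b) z = p b z * p a (z^2^s)\<close>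
  for \<open>b < 2^s\<close>. Since \<open>l m z = (p m (z\<^sup>2) - 1) / z\<^sup>2\<close>, numerator and denominator of the
  quotient are \<open>(c * q n - 1) / z\<^sup>2\<close> and \<open>(c' * q n - 1) / z\<^sup>2\<close> with \<open>q n = p n (z^2^t)\<close>,
  \<open>c = p (2^(t-2)) (z\<^sup>2) = F (t-1) z\<close> and \<open>c' = p (2^(t-2) - 1) (z\<^sup>2) = (F (t-1) z - 2) / (z\<^sup>2 - 1)\<close>.
  So the quotient tends to \<open>c / c'\<close> once \<open>q n \<rightarrow> \<infinity>\<close>. That holds for \<open>|w| > 1\<close>: choose
  \<open>k\<close> with \<open>|w|^2^k \<ge> 3\<close> and factor \<open>p n w = p (n mod 2^k) w * p (n div 2^k) (w^2^k)\<close>; the first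
  factor takes finitely many nonzero values, and the second, a polynomial with 0/1 coefficients
  evaluated at a point of modulus at least 3, is at least half its leading term.
\<close>

lemma choose_double_mod_2:
  "(2*n choose (2*i)) mod 2 = (n choose i) mod 2 \<and> (2*n choose (2*i+1)) mod 2 = 0"
proof (induction n arbitrary: i)
  case 0
  then show ?case by (cases i) simp_all
next
  case (Suc n)
  have double_Suc: "2 * Suc n = Suc (Suc (2*n))" by simp
  have even_index: "(2*Suc n choose (2*i)) mod 2 = (Suc n choose i) mod 2"
  proof (cases i)
    case (Suc j)
    have "2*Suc n choose (2*i) = (2*n choose 2*j) + 2*(2*n choose (2*j+1)) + (2*n choose (2*Suc j))"
      unfolding double_Suc Suc by (simp add: binomial_Suc_Suc)
    then have "(2*Suc n choose (2*i)) mod 2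
        = ((2*n choose 2*j) mod 2 + (2*n choose (2*Suc j)) mod 2) mod 2"
      by presburger
    also have "\<dots> = ((n choose j) + (n choose Suc j)) mod 2"
      using Suc.IH[of j] Suc.IH[of "Suc j"] by (simp add: mod_add_eq)
    finally show ?thesis using Suc by simp
  qed simp
  have odd_index: "(2*Suc n choose (2*i+1)) mod 2 = 0"
  proof (cases i)
    case 0
    have "2*Suc n choose (2*i+1) = 2 * (2*n choose 0) + (2*n choose 1)"
      unfolding double_Suc 0 by (simp add: binomial_Suc_Suc)
    then show ?thesis using Suc.IH[of 0] by simp
  next
    case (Suc j)
    have "2*Suc n choose (2*i+1) =
        (2*n choose (2*j+1)) + 2*(2*n choose (2*Suc j)) + (2*n choose (2*Suc j+1))"
      unfolding double_Suc Suc by (simp add: binomial_Suc_Suc)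
    then have "(2*Suc n choose (2*i+1)) mod 2
        = ((2*n choose (2*j+1)) mod 2 + (2*n choose (2*Suc j+1)) mod 2) mod 2"
      by presburger
    then show ?thesis using Suc.IH[of j] Suc.IH[of "Suc j"] by simp
  qed
  from even_index odd_index show ?case by blast
qed

lemma odd_choose_double: "odd (2*n choose (2*i)) \<longleftrightarrow> odd (n choose i)"
  using choose_double_mod_2[of n i] by (simp add: odd_iff_mod_2_eq_one)

lemma even_choose_double_Suc: "even (2*n choose Suc (2*i))"
  using choose_double_mod_2[of n i] by (simp add: even_iff_mod_2_eq_zero)

lemma odd_choose_Suc_double: "odd (Suc (2*n) choose i) \<longleftrightarrow> odd (n choose (i div 2))"
proof (cases "even i")
  case True
  then obtain j where j: "i = 2*j" by blast
  show ?thesis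
  proof (cases j)
    case (Suc m)
    have "Suc (2*n) choose i = (2*n choose Suc (2*m)) + (2*n choose (2*j))"
      using j Suc by (simp add: binomial_Suc_Suc)
    then show ?thesis using j even_choose_double_Suc[of n m] odd_choose_double[of n j] by simp
  qed (simp add: j)
next
  case False
  then obtain j where j: "i = Suc (2*j)" by (metis oddE Suc_eq_plus1)
  have "Suc (2*n) choose i = (2*n choose (2*j)) + (2*n choose Suc (2*j))"
    using j by (simp add: binomial_Suc_Suc)
  then show ?thesis using j even_choose_double_Suc[of n j] odd_choose_double[of n j] by simp
qed

definition odd_binomials :: "nat \<Rightarrow> nat set" where
  "odd_binomials n = {i. i \<le> n \<and> odd (n choose i)}"

lemma finite_odd_binomials [simp]: "finite (odd_binomials n)"
  by (simp add: odd_binomials_def)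

lemma p_eq_sum_odd_binomials: "p n z = (\<Sum>i\<in>odd_binomials n. z ^ i)"
  by (simp add: p_def odd_binomials_def)

lemma odd_binomials_double: "odd_binomials (2*k) = (\<lambda>j. 2*j) ` odd_binomials k"
proof (intro set_eqI iffI)
  fix i assume i: "i \<in> odd_binomials (2*k)"
  have "even i"
  proof (rule ccontr)
    assume "odd i"
    then obtain j where "i = Suc (2*j)" by (metis oddE Suc_eq_plus1)
    with i even_choose_double_Suc show False by (simp add: odd_binomials_def)
  qed
  then obtain j where "i = 2*j" by blast
  with i show "i \<in> (\<lambda>j. 2*j) ` odd_binomials k"
    using odd_choose_double[of k j] by (auto simp: odd_binomials_def)
next
  fix i assume "i \<in> (\<lambda>j. 2*j) ` odd_binomials k"
  then obtain j where "i = 2*j" "j \<in> odd_binomials k" by blast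
  then show "i \<in> odd_binomials (2*k)"
    using odd_choose_double[of k j] by (simp add: odd_binomials_def)
qed

lemma odd_binomials_Suc_double:
  "odd_binomials (Suc (2*k)) = (\<lambda>j. 2*j) ` odd_binomials k \<union> (\<lambda>j. 2*j+1) ` odd_binomials k"
proof (intro set_eqI iffI)
  fix i assume i: "i \<in> odd_binomials (Suc (2*k))"
  define j where "j = i div 2"
  have "i \<le> Suc (2*k)" using i by (simp add: odd_binomials_def)
  then have "j \<le> k" unfolding j_def by presburger
  with i have j: "j \<in> odd_binomials k"
    by (simp add: j_def odd_binomials_def odd_choose_Suc_double)
  have "i = 2*j \<or> i = 2*j + 1" unfolding j_def by presburger
  with j show "i \<in> (\<lambda>j. 2*j) ` odd_binomials k \<union> (\<lambda>j. 2*j+1) ` odd_binomials k"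
    by (auto intro: image_eqI)
next
  fix i assume "i \<in> (\<lambda>j. 2*j) ` odd_binomials k \<union> (\<lambda>j. 2*j+1) ` odd_binomials k"
  then obtain j where i: "i = 2*j \<or> i = 2*j+1" and j: "j \<in> odd_binomials k" by blast
  then have "i div 2 = j" "i \<le> Suc (2*k)" by (auto simp: odd_binomials_def)
  with j show "i \<in> odd_binomials (Suc (2*k))"
    by (simp add: odd_binomials_def odd_choose_Suc_double)
qed

lemma p_0 [simp]: "p 0 z = 1"
proof -
  have "odd_binomials 0 = {0}" by (auto simp: odd_binomials_def)
  then show ?thesis by (simp add: p_eq_sum_odd_binomials)
qed

lemma p_1 [simp]: "p (Suc 0) z = 1 + z"
proof -
  have "odd_binomials 1 = {0, 1}" by (auto simp: odd_binomials_def le_Suc_eq)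
  then show ?thesis by (simp add: p_eq_sum_odd_binomials)
qed

lemma p_double: "p (2*k) z = p k (z^2)"
  by (simp add: p_eq_sum_odd_binomials odd_binomials_double sum.reindex inj_on_def power_mult)

lemma p_Suc_double: "p (Suc (2*k)) z = (1 + z) * p k (z^2)"
proof -
  let ?S = "odd_binomials k"
  have "p (Suc (2*k)) z = (\<Sum>i\<in>(\<lambda>j. 2*j) ` ?S. z^i) + (\<Sum>i\<in>(\<lambda>j. 2*j+1) ` ?S. z^i)"
    unfolding p_eq_sum_odd_binomials odd_binomials_Suc_double
    by (rule sum.union_disjoint) (auto, presburger)
  also have "\<dots> = (\<Sum>j\<in>?S. (z^2)^j) + (\<Sum>j\<in>?S. z * (z^2)^j)"
    by (simp add: sum.reindex inj_on_def power_mult[symmetric] mult.commute)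
  also have "\<dots> = (1 + z) * p k (z^2)"
    by (simp add: p_eq_sum_odd_binomials sum_distrib_left sum.distrib algebra_simps)
  finally show ?thesis .
qed

lemma p_pow2_mult_add: "b < 2^s \<Longrightarrow> p (2^s * a + b) z = p b z * p a (z^(2^s))"
proof (induction s arbitrary: b z)
  case (Suc s)
  have square_pow: "(z^2)^(2^s) = z^(2^Suc s)" by (simp add: power_mult[symmetric] mult.commute)
  define c where "c = b div 2"
  have c: "b = 2*c \<or> b = Suc (2*c)" unfolding c_def by presburger
  have "c < 2^s" using Suc.prems unfolding c_def by simp
  from c show ?case
  proof
    assume b: "b = 2*c"
    have "p (2^Suc s * a + b) z = p (2*(2^s*a + c)) z" by (simp add: b algebra_simps)
    also have "\<dots> = p c (z^2) * p a ((z^2)^(2^s))" by (simp only: p_double Suc.IH[OF \<open>c < 2^s\<close>])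
    finally show ?thesis by (simp only: b p_double square_pow)
  next
    assume b: "b = Suc (2*c)"
    have "p (2^Suc s * a + b) z = p (Suc (2*(2^s*a + c))) z" by (simp add: b algebra_simps)
    also have "\<dots> = (1 + z) * (p c (z^2) * p a ((z^2)^(2^s)))"
      by (simp only: p_Suc_double Suc.IH[OF \<open>c < 2^s\<close>])
    finally show ?thesis by (simp only: b p_Suc_double square_pow mult.assoc)
  qed
qed simp

lemma p_pow2: "p (2^s) z = 1 + z^(2^s)"
proof (induction s arbitrary: z)
  case (Suc s)
  have "p (2^Suc s) z = p (2^s) (z^2)" by (simp flip: p_double)
  then show ?case by (simp add: Suc.IH power_mult[symmetric] mult.commute)
qed simp

lemma p_pow2_minus_1: "p (2^s - 1) z = (\<Prod>i<s. 1 + z^(2^i))"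
proof (induction s arbitrary: z)
  case (Suc s)
  have "2^Suc s - 1 = Suc (2 * (2^s - 1 :: nat))"
    by (cases "(2::nat)^s") simp_all
  then have "p (2^Suc s - 1) z = (1 + z) * p (2^s - 1) (z^2)"
    by (simp only: p_Suc_double)
  also have "\<dots> = (1 + z) * (\<Prod>i<s. 1 + (z^2)^(2^i))"
    by (simp only: Suc.IH)
  also have "\<dots> = (\<Prod>i<Suc s. 1 + z^(2^i))"
    by (simp del: prod.lessThan_Suc add: prod.lessThan_Suc_shift power_mult[symmetric] mult.commute)
  finally show ?case .
qed simp

lemma pow2_minus_1_eq_prod:
  fixes z :: "'a::comm_ring_1"
  shows "(z - 1) * (\<Prod>i<s. 1 + z^(2^i)) = z^(2^s) - 1"
proof (induction s)
  case (Suc s)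
  have "(z - 1) * (\<Prod>i<Suc s. 1 + z^(2^i)) = (z^(2^s) - 1) * (z^(2^s) + 1)"
    by (simp add: Suc.IH mult.assoc[symmetric] add.commute)
  also have "\<dots> = z^(2^Suc s) - 1"
    by (simp add: algebra_simps flip: power_add mult_2)
  finally show ?case .
qed simp

lemma F_Suc_minus_2: "F (Suc s) z - 2 = (z^2 - 1) * (\<Prod>i<s. F (Suc i) z)"
  using pow2_minus_1_eq_prod[of "z^2" s]
  by (simp add: F_def power_mult[symmetric] mult.commute add.commute)

lemma p_nonzero: "1 < norm w \<Longrightarrow> p n w \<noteq> 0"
proof (induction n arbitrary: w rule: nat_bit_induct)
  case (even n)
  have "1 < norm (w^2)" using even.prems by (simp add: norm_power)
  then show ?case by (simp add: p_double even.IH)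
next
  case (odd n)
  have "1 < norm (w^2)" using odd.prems by (simp add: norm_power)
  moreover have "1 + w \<noteq> 0" using odd.prems by (auto simp: add_eq_0_iff)
  ultimately show ?case by (simp add: p_Suc_double odd.IH)
qed simp

lemma norm_p_ge_half_power:
  assumes "3 \<le> norm u"
  shows "norm u ^ a / 2 \<le> norm (p a u)"
proof -
  define r where "r = norm u"
  define S where "S = odd_binomials a - {a}"
  have p_split: "p a u = u^a + (\<Sum>i\<in>S. u^i)"
  proof -
    have "a \<in> odd_binomials a" by (simp add: odd_binomials_def)
    then show ?thesis by (simp add: p_eq_sum_odd_binomials S_def sum.remove)
  qed
  have "norm (\<Sum>i\<in>S. u^i) \<le> (\<Sum>i\<in>S. r^i)"
    by (rule order_trans[OF norm_sum]) (simp add: norm_power r_def)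
  also have "\<dots> \<le> (\<Sum>i<a. r^i)"
    by (rule sum_mono2) (auto simp: S_def odd_binomials_def r_def)
  also have "\<dots> \<le> r^a / 2"
  proof -
    have "2 * (\<Sum>i<a. r^i) \<le> (r - 1) * (\<Sum>i<a. r^i)"
      using assms by (intro mult_right_mono sum_nonneg) (auto simp: r_def)
    also have "\<dots> = r^a - 1" by (rule power_diff_1_eq[symmetric])
    finally show ?thesis by simp
  qed
  finally have "norm (\<Sum>i\<in>S. u^i) \<le> r^a / 2" .
  moreover have "norm (u^a) - norm (\<Sum>i\<in>S. u^i) \<le> norm (p a u)"
    unfolding p_split by (rule norm_diff_ineq)
  ultimately show ?thesis by (simp add: norm_power r_def)
qed

lemma filterlim_p_at_infinity:
  assumes "1 < norm w"
  shows "filterlim (\<lambda>n. p n w) at_infinity sequentially"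
proof -
  obtain k where k: "3 < norm w ^ k" using real_arch_pow[OF assms] by blast
  define M :: nat where "M = 2^k"
  define r where "r = norm (w^M)"
  have "norm w ^ k \<le> norm w ^ M"
    using assms by (intro power_increasing) (auto simp: M_def less_imp_le)
  with k have r: "3 \<le> r" by (simp add: r_def norm_power)
  define m where "m = Min ((\<lambda>b. norm (p b w)) ` {..<M})"
  have "0 < M" by (simp add: M_def)
  then have m: "0 < m" unfolding m_def using p_nonzero[OF assms] by (subst Min_gr_iff) auto
  have lower_bound: "m / 2 * r ^ (n div M) \<le> norm (p n w)" for n
  proof -
    have "p n w = p (n mod M) w * p (n div M) (w^M)"
      using p_pow2_mult_add[of "n mod M" k "n div M" w] \<open>0 < M\<close> by (simp add: M_def)
    moreover have "m \<le> norm (p (n mod M) w)"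
      unfolding m_def using \<open>0 < M\<close> by (intro Min_le) auto
    moreover have "r ^ (n div M) / 2 \<le> norm (p (n div M) (w^M))"
      using norm_p_ge_half_power r by (simp add: r_def)
    ultimately have "m * (r ^ (n div M) / 2) \<le> norm (p n w)"
      using m r by (simp only: norm_mult) (rule mult_mono, simp_all)
    then show ?thesis by simp
  qed
  have "filterlim (\<lambda>n. r ^ n) at_top sequentially"
    using filterlim_at_infinity_imp_norm_at_top[OF filterlim_realpow_sequentially_gt1[of r]] r
    by simp
  then have "filterlim (\<lambda>n. m / 2 * r ^ (n div M)) at_top sequentially"
    using m by (intro filterlim_tendsto_pos_mult_at_top[OF tendsto_const]
        filterlim_compose[OF _ filterlim_at_top_div_const_nat[OF \<open>0 < M\<close>]]) auto
  then have "filterlim (\<lambda>n. norm (p n w)) at_top sequentially"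
    by (rule filterlim_at_top_mono) (intro always_eventually allI lower_bound)
  then show ?thesis by (rule filterlim_norm_at_top_imp_at_infinity)
qed

lemma tendsto_p_quotient:
  assumes y: "1 < norm y" and "b < 2^k" "c < 2^k"
  shows "(\<lambda>n. (p (2^k * n + b) y - 1) / (p (2^k * n + c) y - 1)) \<longlonglongrightarrow> p b y / p c y"
proof -
  define q where "q n = p n (y^(2^k))" for n
  have "1 < norm (y^(2^k))" using y by (simp add: norm_power one_less_power)
  then have q_nonzero: "q n \<noteq> 0" and "filterlim q at_infinity sequentially" for n
    unfolding q_def by (simp_all add: p_nonzero filterlim_p_at_infinity)
  with filterlim_compose[OF tendsto_inverse_0] have "(\<lambda>n. inverse (q n)) \<longlonglongrightarrow> 0"
    by blast
  then have "(\<lambda>n. (p b y - inverse (q n)) / (p c y - inverse (q n))) \<longlonglongrightarrow> (p b y - 0) / (p c y - 0)"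
    using p_nonzero[OF y] by (intro tendsto_intros) auto
  moreover have "(p (2^k * n + b) y - 1) / (p (2^k * n + c) y - 1)
      = (p b y - inverse (q n)) / (p c y - inverse (q n))" for n
  proof -
    have "(p (2^k * n + b) y - 1) / (p (2^k * n + c) y - 1) = (p b y * q n - 1) / (p c y * q n - 1)"
      using p_pow2_mult_add assms(2,3) by (simp add: q_def)
    also have "\<dots> = ((p b y * q n - 1) / q n) / ((p c y * q n - 1) / q n)"
      using q_nonzero by simp
    also have "\<dots> = (p b y - inverse (q n)) / (p c y - inverse (q n))"
      using q_nonzero by (simp add: diff_divide_distrib inverse_eq_divide)
    finally show ?thesis .
  qed
  ultimately show ?thesis by simp
qed

lemma l_eq_p_square: "l n z = (p n (z^2) - 1) / z^2"
  by (simp add: l_def p_double)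

lemma tendsto_l_quotient:
  assumes z: "1 < norm z"
  shows "(\<lambda>n. l (2^(s+1) * n + 2^s) z / l (2^(s+1) * n + 2^s - 1) z)
           \<longlonglongrightarrow> F (Suc s) z / (\<Prod>i<s. F (Suc i) z)"
proof -
  have "1 < norm (z^2)" using z by (simp add: norm_power one_less_power)
  then have "(\<lambda>n. (p (2^(s+1) * n + 2^s) (z^2) - 1) / (p (2^(s+1) * n + (2^s - 1)) (z^2) - 1))
      \<longlonglongrightarrow> p (2^s) (z^2) / p (2^s - 1) (z^2)"
    by (rule tendsto_p_quotient) (simp_all add: less_imp_diff_less)
  moreover have "l (2^(s+1) * n + 2^s) z / l (2^(s+1) * n + 2^s - 1) z
      = (p (2^(s+1) * n + 2^s) (z^2) - 1) / (p (2^(s+1) * n + (2^s - 1)) (z^2) - 1)" for n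
  proof -
    have "2^(s+1) * n + 2^s - 1 = 2^(s+1) * n + (2^s - 1 :: nat)"
      by (cases "(2::nat)^s") simp_all
    moreover have "z \<noteq> 0" using z by auto
    ultimately show ?thesis by (simp add: l_eq_p_square)
  qed
  moreover have square_pow: "(z^2)^(2^i) = z^(2^Suc i)" for i
    by (simp add: power_mult[symmetric] mult.commute)
  have "p (2^s) (z^2) = F (Suc s) z"
    by (simp add: p_pow2 square_pow F_def add.commute)
  moreover have "p (2^s - 1) (z^2) = (\<Prod>i<s. F (Suc i) z)"
    unfolding p_pow2_minus_1 by (simp add: square_pow F_def add.commute)
  ultimately show ?thesis by simp
qed

theorem mainTheorem17:
  fixes z :: complex and t :: nat
  assumes "norm z > 1" and "t \<ge> 2"
  shows "((\<lambda>n. l (2^(t-1)*n + 2^(t-2)) z / l (2^(t-1)*n + 2^(t-2) - 1) z)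
           \<longlonglongrightarrow> (z^2 - 1) * F (t-1) z / (F (t-1) z - 2)) \<and>
         ((\<lambda>n. l (2*n+1) z / l (2*n) z) \<longlonglongrightarrow> z^2 + 1) \<and>
         ((\<lambda>n. l (4*n+2) z / l (4*n+1) z) \<longlonglongrightarrow> (z^4 + 1) / (z^2 + 1)) \<and>
         ((\<lambda>n. l (8*n+4) z / l (8*n+3) z) \<longlonglongrightarrow> (z^8 + 1) / ((z^4 + 1) * (z^2 + 1)))"
proof (intro conjI)
  note lim = tendsto_l_quotient[OF assms(1)]
  have "1 < norm (z^2)" using assms(1) by (simp add: norm_power one_less_power)
  then have "z^2 - 1 \<noteq> 0" by auto
  then have "(z^2 - 1) * F (Suc s) z / (F (Suc s) z - 2) = F (Suc s) z / (\<Prod>i<s. F (Suc i) z)"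
    for s by (simp add: F_Suc_minus_2)
  moreover have "t - 1 = Suc (t - 2)" "t - 2 + 1 = t - 1" using assms(2) by simp_all
  ultimately show "(\<lambda>n. l (2^(t-1)*n + 2^(t-2)) z / l (2^(t-1)*n + 2^(t-2) - 1) z)
      \<longlonglongrightarrow> (z^2 - 1) * F (t-1) z / (F (t-1) z - 2)"
    using lim[of "t-2"] by simp
  have F_values: "F (Suc 0) z = z^2 + 1" "F (Suc (Suc 0)) z = z^4 + 1" "F 3 z = z^8 + 1"
    "(\<Prod>i<2. F (Suc i) z) = (z^4 + 1) * (z^2 + 1)"
    by (simp_all add: F_def numeral_eq_Suc)
  show "(\<lambda>n. l (2*n+1) z / l (2*n) z) \<longlonglongrightarrow> z^2 + 1"
    using lim[of 0] by (simp add: F_values)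
  show "(\<lambda>n. l (4*n+2) z / l (4*n+1) z) \<longlonglongrightarrow> (z^4 + 1) / (z^2 + 1)"
    using lim[of 1] by (simp add: F_values)
  show "(\<lambda>n. l (8*n+4) z / l (8*n+3) z) \<longlonglongrightarrow> (z^8 + 1) / ((z^4 + 1) * (z^2 + 1))"
    using lim[of 2] by (simp add: F_values add.commute)
qed

end
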